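(* Fix $\mu>0$. For $r\in(0,1)$ consider the equation in the unknown $\kappa\in(0,2\pi)$ $$\frac{4}{\kappa}\tan\frac{\kappa}{4}=\Big(\frac{1-r^2/48}{1-7r^2/48}\Big)\Big[1-\frac{\kappa^2}{\mu}\Big].$$ For each such $r$ this equation has exactly one root $\kappa(r)\in(0,2\pi)$, and $$\lim_{r\to0^+}\frac{\kappa(r)}{r}=\sqrt{\frac{6}{1+48/\mu}} .$$ Consequently, writing $\kappa=kh$ and $r=h/H$, the corresponding wavenumber satisfies $kH\to\sqrt{6/(1+48/\mu)}$, and this limit equals $\pi/2$ if and only if $\frac1\mu=\frac{24/\pi^2-1}{48}$, i.e. $\mu=\frac{48}{24/\pi^2-1}\approx 33.53$.
   Context: This equation is the non-trivial factor of the characteristic equation for symmetric eigenmodes $e^{-Kk^2t}\phi(x)$ of a $2h$-periodic patch heat problem with proportional control of strength $\mu$ in two action regions, where $r=h/H$ is the ratio of patch half-width $h$ to macroscale half-width $H$; $\pi/2$ is the value of $kH$ for the slowest mode $\cos(\pi x/(2H))$ of the heat equation on $(-H,H)$ with Dirichlet conditions. *)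

theory Defs
  imports Complex_Main
begin

definition char_eq :: "real \<Rightarrow> real \<Rightarrow> real \<Rightarrow> bool" where
  "char_eq \<mu> r \<kappa> \<longleftrightarrow>
     (4 / \<kappa>) * tan (\<kappa> / 4) =
       ((1 - r^2 / 48) / (1 - 7 * r^2 / 48)) * (1 - \<kappa>^2 / \<mu>)"

text \<open>The root kappa(r) in (0, 2 pi) (meaningful once uniqueness is established).\<close>
definition kappa_root :: "real \<Rightarrow> real \<Rightarrow> real" where
  "kappa_root \<mu> r = (THE \<kappa>. \<kappa> \<in> {0<..<2*pi} \<and> char_eq \<mu> r \<kappa>)"

end

theory Submission imports Defs "HOL-Real_Asymp.Real_Asymp" begin

text \<open>On (0, 2 pi) the left-hand side of the characteristic equation increases from 1 to infinity
  while the right-hand side decreases from a value c > 1, so there is exactly one crossing.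
  Writing u = kappa/4, the equation reads u^2 ((tan u - u)/u^3 + 16c/mu) = c - 1 with
  c - 1 = 6r^2/(48 - 7r^2); this forces kappa = O(r), hence u \<rightarrow> 0, and since
  (tan u - u)/u^3 \<rightarrow> 1/3 one reads off (kappa/r)^2 \<rightarrow> 2/(1/3 + 16/mu) = 6/(1 + 48/mu).\<close>

definition char_coeff :: "real \<Rightarrow> real" where
  "char_coeff r = (1 - r^2 / 48) / (1 - 7 * r^2 / 48)"

definition tan_excess :: "real \<Rightarrow> real" where
  "tan_excess u = (tan u - u) / u^3"

lemma char_eq_iff_char_coeff:
  "char_eq \<mu> r \<kappa> \<longleftrightarrow> (4 / \<kappa>) * tan (\<kappa> / 4) = char_coeff r * (1 - \<kappa>^2 / \<mu>)"
  unfolding char_eq_def char_coeff_def ..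

lemma char_coeff_minus_one:
  assumes "7 * r^2 < 48"
  shows "char_coeff r - 1 = 6 * r^2 / (48 - 7 * r^2)"
  using assms unfolding char_coeff_def by (simp add: field_simps)

lemma char_coeff_gt_one:
  assumes "r \<noteq> 0" "7 * r^2 < 48"
  shows "char_coeff r > 1"
proof -
  have "6 * r^2 / (48 - 7 * r^2) > 0" using assms by (intro divide_pos_pos) auto
  thus ?thesis using char_coeff_minus_one[OF assms(2)] by linarith
qed

lemma tendsto_char_coeff: "(char_coeff \<longlongrightarrow> 1) (at_right 0)"
proof -
  have "(char_coeff \<longlongrightarrow> (1 - 0^2 / 48) / (1 - 7 * 0^2 / 48)) (at_right 0)"
    unfolding char_coeff_def by (intro tendsto_intros) auto
  thus ?thesis by simp
qed

lemma tan_ge_self: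
  fixes u :: real
  assumes "0 \<le> u" "u < pi/2"
  shows "u \<le> tan u"
proof -
  have "(\<lambda>x. tan x - x) 0 \<le> (\<lambda>x. tan x - x) u"
  proof (rule DERIV_nonneg_imp_nondecreasing[OF assms(1)])
    fix x assume x: "0 \<le> x" "x \<le> u"
    have c: "cos x > 0" using x assms by (intro cos_gt_zero_pi) auto
    have "cos x ^ 2 \<le> 1" using c cos_le_one[of x] by (simp add: power_le_one)
    hence "inverse (cos x ^ 2) - 1 \<ge> 0" using c by (simp add: field_simps)
    moreover have "DERIV (\<lambda>x. tan x - x) x :> inverse (cos x ^ 2) - 1"
      using c by (auto intro!: derivative_eq_intros)
    ultimately show "\<exists>y. DERIV (\<lambda>x. tan x - x) x :> y \<and> y \<ge> 0" by blast
  qed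
  thus ?thesis by simp
qed

lemma tan_excess_nonneg: "0 < u \<Longrightarrow> u < pi/2 \<Longrightarrow> tan_excess u \<ge> 0"
  unfolding tan_excess_def using tan_ge_self[of u] by simp

lemma tendsto_tan_excess: "(tan_excess \<longlongrightarrow> 1/3) (at_right 0)"
proof -
  have "((\<lambda>u::real. (sin u / cos u - u) / u^3) \<longlongrightarrow> 1/3) (at_right 0)" by real_asymp
  thus ?thesis unfolding tan_excess_def tan_def .
qed

lemma tan_div_self_strict_mono:
  fixes a b :: real
  assumes "0 < a" "a < b" "b < pi/2"
  shows "tan a / a < tan b / b"
proof (rule DERIV_pos_imp_increasing[OF assms(2)])
  fix x assume x: "a \<le> x" "x \<le> b"
  have x0: "x > 0" "x < pi/2" using x assms by auto
  have c: "cos x > 0" using x0 by (intro cos_gt_zero_pi) auto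
  have c1: "cos x < 1" using cos_monotone_0_pi[of 0 x] x0 by simp
  have s: "sin x > 0" using x0 by (intro sin_gt_zero) auto
  have "sin x * cos x < sin x" using mult_strict_left_mono[OF c1 s] by simp
  with sin_x_le_x[of x] x0 have sc: "sin x * cos x < x" by linarith
  have D: "DERIV (\<lambda>x. tan x / x) x :> (inverse (cos x ^ 2) * x - tan x * 1) / (x * x)"
    using c x0 by (intro DERIV_divide DERIV_tan DERIV_ident) auto
  have "inverse (cos x ^ 2) * x - tan x = (x - sin x * cos x) / cos x ^ 2"
    using c by (simp add: tan_def field_simps power2_eq_square)
  also have "\<dots> > 0" using sc c by simp
  finally have "(inverse (cos x ^ 2) * x - tan x * 1) / (x * x) > 0" using x0 by simp
  with D show "\<exists>y. DERIV (\<lambda>x. tan x / x) x :> y \<and> y > 0" by blast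
qed

lemma tan_ratio_strict_mono:
  fixes x y :: real
  assumes "0 < x" "x < y" "y < 2*pi"
  shows "(4/x) * tan (x/4) < (4/y) * tan (y/4)"
proof -
  have "tan (x/4) / (x/4) < tan (y/4) / (y/4)"
    using assms by (intro tan_div_self_strict_mono) auto
  thus ?thesis by (simp add: field_simps)
qed

lemma char_fun_strict_mono:
  fixes \<mu> c x y :: real
  assumes "\<mu> > 0" "c \<ge> 0" "0 < x" "x < y" "y < 2*pi"
  shows "(4/x) * tan (x/4) - c * (1 - x^2/\<mu>) < (4/y) * tan (y/4) - c * (1 - y^2/\<mu>)"
proof -
  have "x^2 / \<mu> \<le> y^2 / \<mu>"
    using assms by (intro divide_right_mono power_mono) auto
  hence "c * (1 - y^2/\<mu>) \<le> c * (1 - x^2/\<mu>)" using assms(2) by (intro mult_left_mono) auto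
  thus ?thesis using tan_ratio_strict_mono[OF assms(3-5)] by linarith
qed

lemma char_fun_eventually_neg:
  fixes \<mu> c :: real
  assumes "c > 1"
  shows "eventually (\<lambda>\<kappa>. (4/\<kappa>) * tan (\<kappa>/4) - c * (1 - \<kappa>^2/\<mu>) < 0) (at_right 0)"
proof (rule order_tendstoD(2))
  have "((\<lambda>\<kappa>::real. (4/\<kappa>) * (sin (\<kappa>/4) / cos (\<kappa>/4))) \<longlongrightarrow> 1) (at_right 0)"
    by real_asymp
  hence "((\<lambda>\<kappa>::real. (4/\<kappa>) * tan (\<kappa>/4)) \<longlongrightarrow> 1) (at_right 0)" by (simp add: tan_def)
  thus "((\<lambda>\<kappa>. (4/\<kappa>) * tan (\<kappa>/4) - c * (1 - \<kappa>^2/\<mu>)) \<longlongrightarrow> 1 - c * (1 - 0))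
      (at_right 0)"
    by (intro tendsto_diff tendsto_mult tendsto_const tendsto_divide_zero)
      (auto intro: tendsto_eq_intros)
qed (use assms in simp)

text \<open>The difference of the two sides is positive at 4x for any x < pi/2 with tan x > c pi/2.\<close>
lemma char_fun_has_root:
  fixes \<mu> c :: real
  assumes mu: "\<mu> > 0" and c: "c > 1"
  shows "\<exists>\<kappa>\<in>{0<..<2*pi}. (4/\<kappa>) * tan (\<kappa>/4) = c * (1 - \<kappa>^2/\<mu>)"
proof -
  define h where "h = (\<lambda>\<kappa>::real. (4/\<kappa>) * tan (\<kappa>/4) - c * (1 - \<kappa>^2/\<mu>))"
  obtain b where b: "b > 0" "\<And>y. y > 0 \<Longrightarrow> y < b \<Longrightarrow> h y < 0"
    using char_fun_eventually_neg[OF c] unfolding h_def eventually_at_right_field by auto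
  define a where "a = min (b/2) pi"
  have "0 < a" "a \<le> pi" "a < b" using b pi_gt_zero unfolding a_def by auto
  hence a: "0 < a" "a < 2*pi" "h a < 0" using pi_gt_zero b(2) by auto
  obtain x where x: "0 < x" "x < pi/2" "c * pi/2 < tan x"
    using lemma_tan_total[of "c * pi/2"] c by auto
  define B where "B = 4 * x"
  have B: "0 < B" "B < 2*pi" using x unfolding B_def by auto
  have "tan x / (pi/2) < tan x / x"
    using x tan_gt_zero[of x] by (intro divide_strict_left_mono) auto
  moreover have "c < tan x / (pi/2)" using x by (simp add: field_simps)
  moreover have "c * (1 - B^2/\<mu>) \<le> c" using c mu by (simp add: field_simps)
  ultimately have hB: "h B > 0" unfolding h_def B_def by simp
  have "a \<le> B"
  proof (rule ccontr)
    assume "\<not> a \<le> B"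
    hence "h B < h a" unfolding h_def using mu c B a by (intro char_fun_strict_mono) auto
    thus False using a(3) hB by simp
  qed
  moreover have "continuous_on {a..B} h"
  proof -
    have "cos (k/4) \<noteq> 0" if "k \<in> {a..B}" for k
      using that a B cos_gt_zero_pi[of "k/4"] by auto
    thus ?thesis unfolding h_def using a mu by (intro continuous_intros) auto
  qed
  ultimately obtain k where k: "a \<le> k" "k \<le> B" "h k = 0"
    using IVT'[of h a 0 B] a(3) hB by force
  have "k \<in> {0<..<2*pi}" using k a B by simp
  moreover have "(4/k) * tan (k/4) = c * (1 - k^2/\<mu>)" using k(3) unfolding h_def by simp
  ultimately show ?thesis by blast
qed

lemma char_fun_ex1_root:
  fixes \<mu> c :: real
  assumes "\<mu> > 0" "c > 1"
  shows "\<exists>!\<kappa>. \<kappa> \<in> {0<..<2*pi} \<and> (4/\<kappa>) * tan (\<kappa>/4) = c * (1 - \<kappa>^2/\<mu>)"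
proof -
  define h where "h = (\<lambda>\<kappa>::real. (4/\<kappa>) * tan (\<kappa>/4) - c * (1 - \<kappa>^2/\<mu>))"
  have "strict_mono_on {0<..<2*pi} h"
    unfolding h_def using assms by (intro strict_mono_onI char_fun_strict_mono) auto
  hence inj: "inj_on h {0<..<2*pi}" by (rule strict_mono_on_imp_inj_on)
  obtain \<kappa> where \<kappa>: "\<kappa> \<in> {0<..<2*pi}" "h \<kappa> = 0"
    using char_fun_has_root[OF assms] unfolding h_def by auto
  show ?thesis
  proof (rule ex1I[of _ \<kappa>])
    show "\<kappa> \<in> {0<..<2*pi} \<and> (4/\<kappa>) * tan (\<kappa>/4) = c * (1 - \<kappa>^2/\<mu>)"
      using \<kappa> unfolding h_def by simp
    fix y assume "y \<in> {0<..<2*pi} \<and> (4/y) * tan (y/4) = c * (1 - y^2/\<mu>)"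
    hence "y \<in> {0<..<2*pi}" "h y = h \<kappa>" using \<kappa> unfolding h_def by auto
    thus "y = \<kappa>" using inj_onD[OF inj] \<kappa>(1) by blast
  qed
qed

lemma char_root_identity:
  assumes "\<kappa> \<noteq> 0" "(4/\<kappa>) * tan (\<kappa>/4) = c * (1 - \<kappa>^2/\<mu>)"
  shows "(\<kappa>/4)^2 * (tan_excess (\<kappa>/4) + 16 * c/\<mu>) = c - 1"
proof -
  define u where "u = \<kappa>/4"
  have u: "u \<noteq> 0" "\<kappa> = 4 * u" using assms(1) by (auto simp: u_def)
  have "tan u / u = c * (1 - 16 * u^2/\<mu>)"
    using assms(2) unfolding u(2) by (simp add: power_mult_distrib)
  moreover have "tan u / u - 1 = u^2 * tan_excess u"
    using u unfolding tan_excess_def by (simp add: field_simps power3_eq_cube power2_eq_square)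
  ultimately show ?thesis unfolding u_def[symmetric] by (simp add: algebra_simps)
qed

lemma char_root_sq_le:
  fixes \<mu> c \<kappa> :: real
  assumes "\<mu> > 0" "c \<ge> 1" "0 < \<kappa>" "\<kappa> < 2*pi"
    and "(4/\<kappa>) * tan (\<kappa>/4) = c * (1 - \<kappa>^2/\<mu>)"
  shows "\<kappa>^2 \<le> (c - 1) * \<mu>"
proof -
  have "(\<kappa>/4)^2 * tan_excess (\<kappa>/4) \<ge> 0" using assms by (simp add: tan_excess_nonneg)
  hence "(\<kappa>/4)^2 * (16 * c/\<mu>) \<le> c - 1"
    using char_root_identity[of \<kappa> c \<mu>] assms by (simp add: distrib_left)
  hence "\<kappa>^2 * c \<le> (c - 1) * \<mu>" using assms(1) by (simp add: field_simps power_divide)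
  moreover have "\<kappa>^2 * 1 \<le> \<kappa>^2 * c" using assms(2) by (intro mult_left_mono) auto
  ultimately show ?thesis by simp
qed

lemma kappa_root_ex1:
  assumes "\<mu> > 0" "r \<in> {0<..<1}"
  shows "\<exists>!\<kappa>. \<kappa> \<in> {0<..<2*pi} \<and> char_eq \<mu> r \<kappa>"
proof -
  have "r^2 < 1" using assms(2) by (simp add: power_less_one_iff)
  hence "char_coeff r > 1" using assms(2) by (intro char_coeff_gt_one) auto
  from char_fun_ex1_root[OF assms(1) this] show ?thesis unfolding char_eq_iff_char_coeff .
qed

lemma kappa_root:
  assumes "\<mu> > 0" "r \<in> {0<..<1}"
  shows "kappa_root \<mu> r \<in> {0<..<2*pi}" "char_eq \<mu> r (kappa_root \<mu> r)"
  using theI'[OF kappa_root_ex1[OF assms]] unfolding kappa_root_def by blast+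

lemma kappa_root_le:
  assumes mu: "\<mu> > 0" and r: "r \<in> {0<..<1}"
  shows "kappa_root \<mu> r \<le> sqrt (6 * \<mu>/41) * r"
proof -
  define \<kappa> where "\<kappa> = kappa_root \<mu> r"
  have \<kappa>: "0 < \<kappa>" "\<kappa> < 2*pi" using kappa_root(1)[OF assms] unfolding \<kappa>_def by auto
  have r2: "r^2 < 1" "0 < r^2" using r by (auto simp: power_less_one_iff)
  have c1: "char_coeff r - 1 = 6 * r^2 / (48 - 7 * r^2)" using r2 by (intro char_coeff_minus_one) simp
  have "char_coeff r > 1" using r2 by (intro char_coeff_gt_one) auto
  hence "\<kappa>^2 \<le> (char_coeff r - 1) * \<mu>"
    using kappa_root(2)[OF assms] \<kappa> mu unfolding \<kappa>_def char_eq_iff_char_coeff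
    by (intro char_root_sq_le) auto
  also have "\<dots> \<le> 6 * r^2/41 * \<mu>"
  proof -
    have "6 * r^2 / (48 - 7 * r^2) \<le> 6 * r^2/41" using r2 by (intro divide_left_mono) auto
    thus ?thesis unfolding c1 using mu by (intro mult_right_mono) auto
  qed
  also have "\<dots> = (sqrt (6 * \<mu>/41) * r)^2" using mu by (simp add: power_mult_distrib)
  finally have "\<kappa>^2 \<le> (sqrt (6 * \<mu>/41) * r)^2" .
  moreover have "0 \<le> sqrt (6 * \<mu>/41) * r" using r mu by simp
  ultimately show ?thesis unfolding \<kappa>_def by (rule power2_le_imp_le)
qed

lemma eventually_at_right_0_in_unit_interval:
  "eventually (\<lambda>r. r \<in> {0<..<1}) (at_right (0::real))"
  unfolding eventually_at_right_field by (intro exI[of _ 1]) auto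

lemma tendsto_kappa_root_zero:
  assumes "\<mu> > 0"
  shows "(kappa_root \<mu> \<longlongrightarrow> 0) (at_right 0)"
proof (rule tendsto_sandwich[of "\<lambda>r. 0" _ _ "\<lambda>r. sqrt (6 * \<mu>/41) * r"])
  show "eventually (\<lambda>r. 0 \<le> kappa_root \<mu> r) (at_right 0)"
    using eventually_at_right_0_in_unit_interval
    by (rule eventually_mono) (use kappa_root(1)[OF assms] in fastforce)
  show "eventually (\<lambda>r. kappa_root \<mu> r \<le> sqrt (6 * \<mu>/41) * r) (at_right 0)"
    using eventually_at_right_0_in_unit_interval
    by (rule eventually_mono) (rule kappa_root_le[OF assms])
  have "((\<lambda>r::real. sqrt (6 * \<mu>/41) * r) \<longlongrightarrow> sqrt (6 * \<mu>/41) * 0) (at_right 0)"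
    by (intro tendsto_intros)
  thus "((\<lambda>r::real. sqrt (6 * \<mu>/41) * r) \<longlongrightarrow> 0) (at_right 0)" by simp
qed simp

lemma kappa_root_div_eq:
  assumes mu: "\<mu> > 0" and r: "r \<in> {0<..<1}"
  shows "kappa_root \<mu> r / r =
    sqrt (96 / ((48 - 7 * r^2) * (tan_excess (kappa_root \<mu> r / 4) + 16 * char_coeff r / \<mu>)))"
proof -
  define \<kappa> where "\<kappa> = kappa_root \<mu> r"
  define D where "D = tan_excess (\<kappa>/4) + 16 * char_coeff r / \<mu>"
  have \<kappa>: "0 < \<kappa>" "\<kappa> < 2*pi" using kappa_root(1)[OF assms] unfolding \<kappa>_def by auto
  have r2: "r^2 < 1" "0 < r^2" using r by (auto simp: power_less_one_iff)
  have "char_coeff r > 1" using r2 by (intro char_coeff_gt_one) auto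
  hence "D > 0" unfolding D_def using \<kappa> mu by (intro add_nonneg_pos tan_excess_nonneg) auto
  have "(\<kappa>/4)^2 * D = 6 * r^2 / (48 - 7 * r^2)"
    using char_root_identity[of \<kappa> "char_coeff r" \<mu>] kappa_root(2)[OF assms] \<kappa> r2
    unfolding D_def \<kappa>_def char_eq_iff_char_coeff by (simp add: char_coeff_minus_one)
  hence "(\<kappa>/r)^2 = 96 / ((48 - 7 * r^2) * D)"
    using \<open>D > 0\<close> r2 by (simp add: field_simps power_divide)
  hence "sqrt (96 / ((48 - 7 * r^2) * D)) = \<bar>\<kappa>/r\<bar>" by (metis real_sqrt_abs)
  thus ?thesis using \<kappa> r unfolding \<kappa>_def D_def by simp
qed

lemma tendsto_kappa_root_div:
  assumes mu: "\<mu> > 0"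
  shows "((\<lambda>r. kappa_root \<mu> r / r) \<longlongrightarrow> sqrt (6 / (1 + 48 / \<mu>))) (at_right 0)"
proof -
  have "((\<lambda>r. kappa_root \<mu> r / 4) \<longlongrightarrow> 0 / 4) (at_right 0)"
    by (intro tendsto_intros tendsto_kappa_root_zero[OF mu]) simp
  moreover have "eventually (\<lambda>r. kappa_root \<mu> r / 4 > 0) (at_right 0)"
    using eventually_at_right_0_in_unit_interval
    by (rule eventually_mono) (use kappa_root(1)[OF mu] in fastforce)
  ultimately have "filterlim (\<lambda>r. kappa_root \<mu> r / 4) (at_right 0) (at_right 0)"
    by (intro tendsto_imp_filterlim_at_right) simp_all
  hence "((\<lambda>r. tan_excess (kappa_root \<mu> r / 4)) \<longlongrightarrow> 1/3) (at_right 0)"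
    by (rule filterlim_compose[OF tendsto_tan_excess])
  moreover have "(48 - 7 * 0^2) * (1/3 + 16 * 1 / \<mu>) \<noteq> (0::real)"
    using mu by (simp add: field_simps)
  ultimately have "((\<lambda>r. sqrt (96 / ((48 - 7 * r^2) *
      (tan_excess (kappa_root \<mu> r / 4) + 16 * char_coeff r / \<mu>))))
      \<longlongrightarrow> sqrt (96 / ((48 - 7 * 0^2) * (1/3 + 16 * 1 / \<mu>)))) (at_right 0)"
    using mu by (intro tendsto_intros tendsto_char_coeff) auto
  moreover have "sqrt (96 / ((48 - 7 * 0^2) * (1/3 + 16 * 1 / \<mu>))) = sqrt (6 / (1 + 48 / \<mu>))"
    using mu by (simp add: field_simps)
  moreover have "eventually (\<lambda>r. sqrt (96 / ((48 - 7 * r^2) *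
      (tan_excess (kappa_root \<mu> r / 4) + 16 * char_coeff r / \<mu>))) = kappa_root \<mu> r / r) (at_right 0)"
    using eventually_at_right_0_in_unit_interval
    by (rule eventually_mono) (simp add: kappa_root_div_eq[OF mu])
  ultimately show ?thesis using tendsto_cong by force
qed

lemma sqrt_six_div_eq_half_pi_iff:
  fixes \<mu> :: real
  assumes "\<mu> > 0"
  shows "sqrt (6 / (1 + 48 / \<mu>)) = pi / 2 \<longleftrightarrow> 1 / \<mu> = (24 / pi^2 - 1) / 48"
proof -
  have pos: "1 + 48 / \<mu> > 0" using assms by (simp add: add_pos_pos)
  have "pi / 2 = sqrt ((pi / 2)^2)" using pi_gt_zero by simp
  hence "sqrt (6 / (1 + 48 / \<mu>)) = pi / 2 \<longleftrightarrow> 6 / (1 + 48 / \<mu>) = (pi / 2)^2"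
    by (metis real_sqrt_eq_iff)
  also have "\<dots> \<longleftrightarrow> 1 / \<mu> = (24 / pi^2 - 1) / 48"
    using pos assms by (auto simp: field_simps power2_eq_square)
  finally show ?thesis .
qed

lemma inverse_eq_divide_iff:
  fixes \<mu> a b :: "'a :: field"
  assumes "\<mu> \<noteq> 0" "b \<noteq> 0"
  shows "1 / \<mu> = a / b \<longleftrightarrow> \<mu> = b / a"
  using assms by (cases "a = 0") (auto simp: field_simps)

theorem mainTheorem4:
  fixes \<mu> :: real
  assumes "\<mu> > 0"
  shows "(\<forall>r \<in> {0<..<1}. \<exists>!\<kappa>. \<kappa> \<in> {0<..<2*pi} \<and> char_eq \<mu> r \<kappa>)
    \<and> ((\<lambda>r. kappa_root \<mu> r / r) \<longlongrightarrow> sqrt (6 / (1 + 48 / \<mu>))) (at_right 0)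
    \<and> (sqrt (6 / (1 + 48 / \<mu>)) = pi / 2 \<longleftrightarrow> 1 / \<mu> = (24 / pi^2 - 1) / 48)
    \<and> (sqrt (6 / (1 + 48 / \<mu>)) = pi / 2 \<longleftrightarrow> \<mu> = 48 / (24 / pi^2 - 1))"
  using kappa_root_ex1[OF assms] tendsto_kappa_root_div[OF assms]
    sqrt_six_div_eq_half_pi_iff[OF assms] inverse_eq_divide_iff[of \<mu> 48 "24 / pi^2 - 1"] assms
  by simp

end
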